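(* Let $l\in\mathbb{N}$ and $k_1,\dots,k_l\in\mathbb{N}$ with $k_j\mid k_{j-1}$ for $j=2,\dots,l$. Let $M\subset\mathbb{N}$ be the finite set with $\Lambda_{k_1}-\Lambda_{k_2}+\dots+(-1)^{l-1}\Lambda_{k_l}=\sum_{m\in M}\Psi_m$. Then $M$ is either empty, or it satisfies both of the following: (1) $M$ contains a largest number $m_1$, and $\mathcal{G}(M)$ is a directed graph with root $m_1$, i.e. every vertex of $\mathcal{G}(M)$ can be reached from $m_1$ by a directed path; (2) there is a directed path in $\mathcal{G}(M)$ consisting only of $2$-edges which contains a vertex of every $2$-plane of $\mathcal{G}(M)$.
   Context: $\mathbb{Q}\langle S^{UR}\rangle$ is the group ring over $\mathbb{Q}$ of the group of roots of unity, with elements $\sum b_j\langle\zeta_j\rangle$; $\Lambda_m=\sum_{a=0}^{m-1}\langle e^{2\pi i a/m}\rangle$ and $\Psi_m=\sum_{\zeta\text{ of order }m}\langle\zeta\rangle$, so $\Lambda_k=\sum_{m\mid k}\Psi_m$. For a finite set $M\subset\mathbb{N}$ the directed graph $\mathcal{G}(M)$ has vertex set $M$, and there is a directed edge from $m_1\in M$ to $m_2\in M$ iff $m_1/m_2=p^e$ for some prime $p$ and some $e\ge1$ and there is no $m_3\in M\setminus\{m_1,m_2\}$ with $m_2\mid m_3\mid m_1$; such an edge is labelled $p$ and called a $p$-edge. For a prime $p$, the $p$-planes of $\mathcal{G}(M)$ are the connected components of the graph obtained from $\mathcal{G}(M)$ by deleting all $p$-edges. *)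

theory Defs
  imports "HOL-Analysis.Analysis"
begin

text \<open>Elements of the group ring Q<S^UR> are modelled as finitely supported
  functions from complex numbers (supported on roots of unity) to rationals;
  the element sum b_j <zeta_j> is the function sending zeta_j to b_j.\<close>

definition grp_elem :: "complex \<Rightarrow> complex \<Rightarrow> rat" where
  "grp_elem \<zeta> = (\<lambda>z. if z = \<zeta> then 1 else 0)"

definition Lambda :: "nat \<Rightarrow> complex \<Rightarrow> rat" where
  "Lambda m = (\<lambda>z. \<Sum>a<m. grp_elem (exp (2 * pi * \<i> * of_nat a / of_nat m)) z)"

definition has_order :: "complex \<Rightarrow> nat \<Rightarrow> bool" where
  "has_order z m \<longleftrightarrow> 0 < m \<and> z ^ m = 1 \<and> (\<forall>d. 0 < d \<and> d < m \<longrightarrow> z ^ d \<noteq> 1)"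

definition Psi :: "nat \<Rightarrow> complex \<Rightarrow> rat" where
  "Psi m = (\<lambda>z. if has_order z m then 1 else 0)"

definition pedge :: "nat set \<Rightarrow> nat \<Rightarrow> nat \<Rightarrow> nat \<Rightarrow> bool" where
  "pedge M p m1 m2 \<longleftrightarrow> m1 \<in> M \<and> m2 \<in> M \<and> prime p \<and>
     (\<exists>e\<ge>1. m1 = m2 * p ^ e) \<and>
     \<not> (\<exists>m3 \<in> M - {m1, m2}. m2 dvd m3 \<and> m3 dvd m1)"

definition edge :: "nat set \<Rightarrow> nat \<Rightarrow> nat \<Rightarrow> bool" where
  "edge M m1 m2 \<longleftrightarrow> (\<exists>p. pedge M p m1 m2)"

definition non_p_edge :: "nat set \<Rightarrow> nat \<Rightarrow> nat \<Rightarrow> nat \<Rightarrow> bool" where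
  "non_p_edge M p a b \<longleftrightarrow> edge M a b \<and> \<not> pedge M p a b"

text \<open>Vertices a, b in M are in the same p-plane: connected (ignoring direction)
  in G(M) with all p-edges deleted.\<close>
definition same_plane :: "nat set \<Rightarrow> nat \<Rightarrow> nat \<Rightarrow> nat \<Rightarrow> bool" where
  "same_plane M p a b \<longleftrightarrow> a \<in> M \<and> b \<in> M \<and>
     (\<lambda>x y. non_p_edge M p x y \<or> non_p_edge M p y x)\<^sup>*\<^sup>* a b"

definition planes :: "nat set \<Rightarrow> nat \<Rightarrow> nat set set" where
  "planes M p = {{b. same_plane M p a b} | a. a \<in> M}"

definition p_path :: "nat set \<Rightarrow> nat \<Rightarrow> nat list \<Rightarrow> bool" where
  "p_path M p xs \<longleftrightarrow> xs \<noteq> [] \<and> set xs \<subseteq> M \<and>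
     (\<forall>i. Suc i < length xs \<longrightarrow> pedge M p (xs ! i) (xs ! Suc i))"

end

theory Submission
  imports Defs
begin

text \<open>Evaluating both sides at a primitive \<open>x\<close>-th root of unity shows that \<open>x \<in> M\<close> iff the
  number of \<open>j\<close> with \<open>x dvd k j\<close> is odd; by the divisibility chain these \<open>j\<close> form an initial
  segment \<open>{1..depth x}\<close>. Now fix \<open>q\<close> (a prime, or \<open>1\<close>) and \<open>v \<in> M\<close>. Either some \<open>v * p ^ e\<close>
  with a prime \<open>p \<noteq> q\<close> lies in \<open>M\<close> -- raise the \<open>p\<close>-part of \<open>v\<close> to that of \<open>k (depth v)\<close>, or to
  that of \<open>k j\<close> for an odd \<open>j\<close> where the \<open>p\<close>-part of the chain drops -- or every element of \<open>M\<close>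
  with the same \<open>q\<close>-multiplicity as \<open>v\<close> divides \<open>v\<close>. Hence \<open>p\<close>-edges with \<open>p \<noteq> q\<close>, followed
  upwards, connect every element to the maximum of its \<open>q\<close>-level. For \<open>q = 1\<close> this makes
  \<open>Max M\<close> a root; for \<open>q = 2\<close> it puts each 2-level into a single 2-plane. Finally, for an odd
  \<open>c\<close> of minimal odd depth, \<open>c * 2 ^ a \<in> M\<close> for every 2-level \<open>a\<close> of \<open>M\<close>, and these elements,
  in decreasing order, form a path of 2-edges.\<close>

section \<open>Roots of unity\<close>

lemma Lambda_eq_root_indicator:
  assumes "0 < k"
  shows "Lambda k z = (if z ^ k = 1 then 1 else 0)"
proof -
  define \<omega> :: "nat \<Rightarrow> complex" where "\<omega> = (\<lambda>a. exp (2 * pi * \<i> * of_nat a / of_nat k))"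
  have bij: "bij_betw \<omega> {..<k} {w. w ^ k = 1}"
    using bij_betw_roots_unity[of k] complex_roots_unity[of k] assms by (simp add: \<omega>_def)
  have "Lambda k z = (\<Sum>a<k. (\<lambda>w. if z = w then 1 else 0) (\<omega> a))"
    by (simp add: Lambda_def grp_elem_def \<omega>_def)
  also have "\<dots> = (\<Sum>w\<in>{w. w ^ k = 1}. if z = w then 1 else 0)"
    by (rule sum.reindex_bij_betw[OF bij])
  also have "\<dots> = (if z ^ k = 1 then 1 else 0)"
    using finite_roots_unity[of k] assms by (subst sum.delta') auto
  finally show ?thesis .
qed

lemma primitive_root_power_eq_1_iff:
  assumes "0 < x"
  shows "exp (2 * of_real pi * \<i> / of_nat x) ^ d = 1 \<longleftrightarrow> x dvd d"
proof -
  have "exp (2 * of_real pi * \<i> / of_nat x) ^ d = exp (of_nat d * (2 * of_real pi * \<i> / of_nat x))"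
    by (rule exp_of_nat_mult[symmetric])
  also have "of_nat d * (2 * of_real pi * \<i> / of_nat x) = 2 * of_real pi * \<i> * of_nat d / of_nat x"
    by simp
  finally show ?thesis
    using complex_root_unity_eq_1[of x d] assms by simp
qed

lemma has_order_primitive_root:
  assumes "0 < x"
  shows "has_order (exp (2 * of_real pi * \<i> / of_nat x)) m \<longleftrightarrow> m = x"
  unfolding has_order_def primitive_root_power_eq_1_iff[OF assms]
  using assms by (metis dvd_imp_le dvd_refl le_neq_implies_less not_le)

lemma sum_Psi_primitive_root:
  assumes "finite M" and "0 < x"
  shows "(\<Sum>m\<in>M. Psi m (exp (2 * of_real pi * \<i> / of_nat x))) = (if x \<in> M then 1 else 0)"
  unfolding Psi_def has_order_primitive_root[OF assms(2)] using assms(1) by simp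

section \<open>Prime-power multiples and \<open>p\<close>-edges\<close>

lemma multiplicity_mult_prime_power:
  fixes v p r e :: nat
  assumes "v \<noteq> 0" "prime p" "prime r"
  shows "multiplicity r (v * p ^ e) = multiplicity r v + (if r = p then e else 0)"
proof -
  have "multiplicity r (v * p ^ e) = multiplicity r v + multiplicity r (p ^ e)"
    using assms by (intro prime_elem_multiplicity_mult_distrib) auto
  also have "multiplicity r (p ^ e) = (if r = p then e else 0)"
    using assms by (auto simp: multiplicity_distinct_prime_power)
  finally show ?thesis .
qed

lemma multiplicity_mult_prime_power_other:
  fixes v p q e :: nat
  assumes "v \<noteq> 0" "prime p" "q = 1 \<or> prime q" "p \<noteq> q"
  shows "multiplicity q (v * p ^ e) = multiplicity q v"
  using assms multiplicity_mult_prime_power[of v p q e] by (auto simp: multiplicity_unit_left)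

lemma dvd_mult_prime_power_to_multiplicity:
  fixes v n p :: nat
  assumes "v dvd n" "n \<noteq> 0" "prime p"
  obtains e where "multiplicity p v + e = multiplicity p n" "v * p ^ e dvd n"
proof -
  obtain m where n: "n = v * m" using assms(1) by blast
  then have "v \<noteq> 0" "m \<noteq> 0" using assms(2) by auto
  then have "multiplicity p n = multiplicity p v + multiplicity p m"
    unfolding n using assms(3) by (simp add: prime_elem_multiplicity_mult_distrib)
  moreover have "v * p ^ multiplicity p m dvd n"
    unfolding n by (simp add: multiplicity_dvd)
  ultimately show ?thesis using that by simp
qed

lemma pedge_label_unique:
  assumes "pedge M p x y" "pedge M q x y" "y \<noteq> 0"
  shows "p = q"
proof -
  obtain e where e: "1 \<le> e" "x = y * p ^ e" and p: "prime p"
    using assms(1) by (auto simp: pedge_def)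
  obtain f where f: "x = y * q ^ f" and q: "prime q"
    using assms(2) by (auto simp: pedge_def)
  have "p dvd p ^ e" using e(1) by (simp add: dvd_power)
  also have "p ^ e = q ^ f" using e(2) f assms(3) by simp
  finally show ?thesis using p q by (metis prime_dvd_power primes_dvd_imp_eq)
qed

lemma non_p_edge_if_pedge_other:
  assumes "pedge M p x y" "p \<noteq> q" "y \<noteq> 0"
  shows "non_p_edge M q x y"
  using assms pedge_label_unique[of M p x y q] by (auto simp: non_p_edge_def edge_def)

lemma pedge_if_none_between:
  fixes x y p e :: nat
  assumes "x \<in> M" "y \<in> M" "0 < y" "prime p" "x = y * p ^ e" "1 \<le> e"
    and none_between: "\<And>g. y * p ^ g \<in> M \<Longrightarrow> \<not> (y < y * p ^ g \<and> y * p ^ g < x)"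
  shows "pedge M p x y"
proof -
  have "\<not> (\<exists>m\<in>M - {x, y}. y dvd m \<and> m dvd x)"
  proof
    assume "\<exists>m\<in>M - {x, y}. y dvd m \<and> m dvd x"
    then obtain m where m: "m \<in> M" "m \<noteq> x" "m \<noteq> y" "y dvd m" "m dvd x"
      by blast
    then obtain d where "m = y * d" by (elim dvdE)
    with m have d: "y * d \<in> M" "y * d \<noteq> x" "y * d \<noteq> y" "y * d dvd x"
      by auto
    then obtain g where g: "d = p ^ g"
      using assms(3,5) divides_primepow_nat[OF assms(4)] by auto
    have "0 < x" using assms(3,4,5) by (simp add: prime_gt_0_nat)
    then have "y * d \<le> x" "0 < d" using d(4) by (auto intro: dvd_imp_le dvd_pos_nat)
    then have "y < y * d" "y * d < x" using d(2,3) by simp_all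
    then show False using none_between[of g] d(1) g by blast
  qed
  then show ?thesis using assms(1-6) by (auto simp: pedge_def)
qed

lemma ex_pedge_below:
  fixes v p e :: nat
  assumes "v \<in> M" "v * p ^ e \<in> M" "0 < v" "prime p" "1 \<le> e"
  shows "\<exists>f\<ge>1. v * p ^ f \<in> M \<and> pedge M p (v * p ^ f) v"
proof -
  define f where "f = (LEAST f. 1 \<le> f \<and> v * p ^ f \<in> M)"
  have f: "1 \<le> f" "v * p ^ f \<in> M"
    using LeastI[of "\<lambda>f. 1 \<le> f \<and> v * p ^ f \<in> M" e] assms(2,5) by (auto simp: f_def)
  have f_least: "f \<le> g" if "1 \<le> g" "v * p ^ g \<in> M" for g
    using that by (auto simp: f_def intro: Least_le)
  have "pedge M p (v * p ^ f) v"
  proof (rule pedge_if_none_between[OF f(2) assms(1,3,4) refl f(1)])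
    fix g assume g: "v * p ^ g \<in> M"
    show "\<not> (v < v * p ^ g \<and> v * p ^ g < v * p ^ f)"
    proof
      assume "v < v * p ^ g \<and> v * p ^ g < v * p ^ f"
      then have "1 < p ^ g" "p ^ g < p ^ f" by simp_all
      then have "g \<noteq> 0" "p ^ g < p ^ f" by (metis power_0 less_irrefl)+
      then show False
        using f_least[OF _ g] power_less_imp_less_exp prime_gt_1_nat[OF assms(4)] by fastforce
    qed
  qed
  then show ?thesis using f by blast
qed

lemma sorted_wrt_greater_nth_gap:
  fixes xs :: "'a::linorder list"
  assumes "sorted_wrt (>) xs" "Suc i < length xs" "z \<in> set xs"
  shows "\<not> (xs ! Suc i < z \<and> z < xs ! i)"
proof
  assume between: "xs ! Suc i < z \<and> z < xs ! i"
  obtain j where j: "j < length xs" "z = xs ! j" using assms(3) by (metis in_set_conv_nth)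
  show False
  proof (cases "j \<le> i")
    case True
    then have "xs ! i \<le> xs ! j"
      using sorted_wrt_nth_less[OF assms(1), of j i] assms(2) j by (cases "j = i") auto
    then show False using between j by (metis leD)
  next
    case False
    then have "xs ! j \<le> xs ! Suc i"
      using sorted_wrt_nth_less[OF assms(1), of "Suc i" j] assms(2) j by (cases "j = Suc i") auto
    then show False using between j by (metis leD)
  qed
qed

lemma ex_p_path_through_prime_power_multiples:
  fixes c p :: nat
  assumes "finite M" "\<forall>m\<in>M. 0 < m" "prime p" "{x\<in>M. \<exists>e. x = c * p ^ e} \<noteq> {}"
  shows "\<exists>xs. p_path M p xs \<and> set xs = {x\<in>M. \<exists>e. x = c * p ^ e}"
proof -
  define B where "B = {x\<in>M. \<exists>e. x = c * p ^ e}"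
  have "finite B" using assms(1) by (simp add: B_def)
  then obtain ys where ys: "sorted_wrt (<) ys" "set ys = B"
    using finite_set_strict_sorted by blast
  define xs where "xs = rev ys"
  have set_xs: "set xs = B" and xs_dec: "sorted_wrt (>) xs"
    using ys by (simp_all add: xs_def sorted_wrt_rev)
  have "pedge M p (xs ! i) (xs ! Suc i)" if i: "Suc i < length xs" for i
  proof -
    have "xs ! i \<in> B" "xs ! Suc i \<in> B"
      using nth_mem[of i xs] nth_mem[of "Suc i" xs] i set_xs by auto
    then obtain a b where a: "xs ! i = c * p ^ a" "xs ! i \<in> M"
      and b: "xs ! Suc i = c * p ^ b" "xs ! Suc i \<in> M" unfolding B_def by blast
    have less: "xs ! Suc i < xs ! i" using sorted_wrt_nth_less[OF xs_dec, of i "Suc i"] i by simp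
    have "0 < c * p ^ b" using b assms(2) by metis
    then have "0 < c" by simp
    then have "p ^ b < p ^ a" using less unfolding a(1) b(1) by simp
    then have "b < a" using power_less_imp_less_exp prime_gt_1_nat[OF assms(3)] by blast
    then have x_eq: "xs ! i = xs ! Suc i * p ^ (a - b)"
      unfolding a(1) b(1) by (metis le_add_diff_inverse less_imp_le mult.assoc power_add)
    show ?thesis
    proof (rule pedge_if_none_between[OF a(2) b(2) _ assms(3) x_eq])
      show "0 < xs ! Suc i" using b(2) assms(2) by blast
      show "1 \<le> a - b" using \<open>b < a\<close> by simp
      fix g assume "xs ! Suc i * p ^ g \<in> M"
      moreover have "xs ! Suc i * p ^ g = c * p ^ (b + g)" using b(1) by (simp add: power_add)
      ultimately have "xs ! Suc i * p ^ g \<in> set xs" unfolding set_xs B_def by blast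
      then show "\<not> (xs ! Suc i < xs ! Suc i * p ^ g \<and> xs ! Suc i * p ^ g < xs ! i)"
        by (rule sorted_wrt_greater_nth_gap[OF xs_dec i])
    qed
  qed
  moreover have "xs \<noteq> []" using assms(4) set_xs B_def by auto
  moreover have "set xs \<subseteq> M" using set_xs B_def by auto
  ultimately have "p_path M p xs" unfolding p_path_def by blast
  then show ?thesis using set_xs unfolding B_def by blast
qed

section \<open>The divisibility chain\<close>

definition dvd_indices :: "nat \<Rightarrow> (nat \<Rightarrow> nat) \<Rightarrow> nat \<Rightarrow> nat set" where
  "dvd_indices l k x = {j\<in>{1..l}. x dvd k j}"

lemma sum_alternating_signs: "(\<Sum>j=1..t. (-1::rat) ^ (j - 1)) = (if odd t then 1 else 0)"
  by (induction t) (auto simp: power_Suc)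

locale divisor_chain =
  fixes l :: nat and k :: "nat \<Rightarrow> nat"
  assumes k_pos: "\<forall>j\<in>{1..l}. 0 < k j"
    and k_dvd_prev: "\<forall>j\<in>{2..l}. k j dvd k (j - 1)"
begin

abbreviation depth :: "nat \<Rightarrow> nat" where
  "depth x \<equiv> card (dvd_indices l k x)"

lemma k_nonzero: "1 \<le> j \<Longrightarrow> j \<le> l \<Longrightarrow> k j \<noteq> 0"
  using k_pos by auto

lemma k_dvd:
  assumes "i \<le> j" "1 \<le> i" "j \<le> l"
  shows "k j dvd k i"
  using assms
proof (induction j rule: dec_induct)
  case (step n)
  then have "Suc n \<in> {2..l}" by simp
  then have "k (Suc n) dvd k n" using k_dvd_prev by fastforce
  with step show ?case by (meson Suc_leD dvd_trans)
qed simp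

lemma dvd_indices_eq: "dvd_indices l k x = {1..depth x}"
proof (cases "dvd_indices l k x = {}")
  case True
  then show ?thesis by simp
next
  case False
  define t where "t = Max (dvd_indices l k x)"
  have "finite (dvd_indices l k x)" by (simp add: dvd_indices_def)
  then have t: "t \<in> {1..l}" "x dvd k t"
    using Max_in[OF _ False] by (simp_all add: t_def dvd_indices_def)
  have "dvd_indices l k x = {1..t}"
  proof
    show "dvd_indices l k x \<subseteq> {1..t}"
      using \<open>finite (dvd_indices l k x)\<close> by (auto simp: t_def dvd_indices_def)
    show "{1..t} \<subseteq> dvd_indices l k x"
      using t k_dvd by (auto simp: dvd_indices_def intro: dvd_trans)
  qed
  then show ?thesis by simp
qed

lemma dvd_k_iff:
  assumes "1 \<le> j" "j \<le> l"
  shows "x dvd k j \<longleftrightarrow> j \<le> depth x"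
proof -
  have "x dvd k j \<longleftrightarrow> j \<in> dvd_indices l k x" using assms by (simp add: dvd_indices_def)
  also have "\<dots> \<longleftrightarrow> j \<in> {1..depth x}"
    by (rule arg_cong[where f = "\<lambda>S. j \<in> S", OF dvd_indices_eq])
  finally show ?thesis using assms(1) by simp
qed

lemma depth_le: "depth x \<le> l"
  by (rule order.trans[OF card_mono[of "{1..l}"]]) (auto simp: dvd_indices_def)

lemma depth_eqI:
  assumes "1 \<le> t" "t \<le> l" "x dvd k t" "t < l \<Longrightarrow> \<not> x dvd k (Suc t)"
  shows "depth x = t"
proof -
  have "t \<le> depth x" using assms(1-3) dvd_k_iff by blast
  moreover have "\<not> t < depth x"
  proof
    assume "t < depth x"
    then have "t < l" "Suc t \<le> depth x" using depth_le[of x] by auto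
    then show False using assms(4) dvd_k_iff[of "Suc t" x] by simp
  qed
  ultimately show ?thesis by simp
qed

lemma depth_antimono: "x dvd y \<Longrightarrow> depth y \<le> depth x"
  by (rule card_mono) (auto simp: dvd_indices_def intro: dvd_trans)

lemma depth_one: "depth 1 = l"
proof -
  have "dvd_indices l k 1 = {1..l}" by (auto simp: dvd_indices_def)
  then show ?thesis by simp
qed

lemma depth_coprime_mult: "coprime a b \<Longrightarrow> depth (a * b) = min (depth a) (depth b)"
proof -
  assume "coprime a b"
  then have "dvd_indices l k (a * b) = dvd_indices l k a \<inter> dvd_indices l k b"
    by (auto simp: dvd_indices_def intro: divides_mult dvd_mult_left dvd_mult_right)
  also have "\<dots> = {1..depth a} \<inter> {1..depth b}"
    by (rule arg_cong2[where f = "(\<inter>)", OF dvd_indices_eq dvd_indices_eq])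
  finally show ?thesis by simp
qed

lemma alternating_Lambda_sum_primitive_root:
  assumes "0 < x"
  shows "(\<Sum>j=1..l. (-1) ^ (j - 1) * Lambda (k j) (exp (2 * of_real pi * \<i> / of_nat x))) =
    (if odd (depth x) then 1 else 0)"
proof -
  have "(\<Sum>j=1..l. (-1) ^ (j - 1) * Lambda (k j) (exp (2 * of_real pi * \<i> / of_nat x))) =
      (\<Sum>j\<in>{1..l}. if x dvd k j then (-1) ^ (j - 1) else 0)"
    using k_pos by (intro sum.cong) (auto simp: Lambda_eq_root_indicator primitive_root_power_eq_1_iff assms)
  also have "\<dots> = (\<Sum>j\<in>{j\<in>{1..l}. x dvd k j}. (-1::rat) ^ (j - 1))"
    by (rule sum.inter_filter[symmetric]) simp
  also have "{j\<in>{1..l}. x dvd k j} = {1..depth x}"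
    by (subst dvd_indices_def[symmetric]) (rule dvd_indices_eq)
  also have "(\<Sum>j=1..depth x. (-1::rat) ^ (j - 1)) = (if odd (depth x) then 1 else 0)"
    by (rule sum_alternating_signs)
  finally show ?thesis .
qed

lemma mem_iff_odd_depth:
  assumes "(\<lambda>z. \<Sum>j=1..l. (-1) ^ (j - 1) * Lambda (k j) z) = (\<lambda>z. \<Sum>m\<in>M. Psi m z)"
    and "finite M" and "0 < x"
  shows "x \<in> M \<longleftrightarrow> odd (depth x)"
  using fun_cong[OF assms(1), of "exp (2 * of_real pi * \<i> / of_nat x)"]
  unfolding alternating_Lambda_sum_primitive_root[OF assms(3)] sum_Psi_primitive_root[OF assms(2,3)]
  by (simp split: if_splits)

end

section \<open>The set \<open>M\<close> and its graph\<close>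

definition edge_avoiding :: "nat set \<Rightarrow> nat \<Rightarrow> nat \<Rightarrow> nat \<Rightarrow> bool" where
  "edge_avoiding M q x y \<longleftrightarrow> (\<exists>p. p \<noteq> q \<and> pedge M p x y)"

locale odd_depth_set = divisor_chain +
  fixes M :: "nat set"
  assumes M_eq: "M = {x. 0 < x \<and> odd (card (dvd_indices l k x))}"
    and finite_M: "finite M"
begin

lemma mem_M_iff: "x \<in> M \<longleftrightarrow> 0 < x \<and> odd (depth x)"
  by (simp add: M_eq)

lemma depth_ge_1: "x \<in> M \<Longrightarrow> 1 \<le> depth x"
  using mem_M_iff odd_pos by fastforce

lemma dvd_k_depth: "x \<in> M \<Longrightarrow> x dvd k (depth x)"
  using dvd_k_iff[of "depth x" x] depth_ge_1 depth_le by blast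

lemma k_depth_nonzero: "x \<in> M \<Longrightarrow> k (depth x) \<noteq> 0"
  using k_nonzero depth_ge_1 depth_le by blast

lemma ex_mult_prime_power_mem_at_depth:
  assumes v: "v \<in> M" and p: "prime p"
    and less: "multiplicity p v < multiplicity p (k (depth v))"
  shows "\<exists>e\<ge>1. v * p ^ e \<in> M"
proof -
  obtain e where e: "multiplicity p v + e = multiplicity p (k (depth v))"
    and dvd: "v * p ^ e dvd k (depth v)"
    using dvd_mult_prime_power_to_multiplicity[OF dvd_k_depth[OF v] k_depth_nonzero[OF v] p] .
  have "depth v \<le> depth (v * p ^ e)"
    using dvd dvd_k_iff depth_ge_1[OF v] depth_le by blast
  moreover have "depth (v * p ^ e) \<le> depth v" by (rule depth_antimono) simp
  ultimately have "depth (v * p ^ e) = depth v" by simp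
  moreover have "0 < v * p ^ e" using v p by (simp add: mem_M_iff prime_gt_0_nat)
  ultimately have "v * p ^ e \<in> M" using v by (simp add: mem_M_iff)
  moreover have "1 \<le> e" using e less by simp
  ultimately show ?thesis by blast
qed

lemma ex_mult_prime_power_mem_at_odd_index:
  assumes v: "v \<in> M" and j: "odd j" "1 \<le> j" "j < depth v" and p: "prime p"
    and drop: "multiplicity p (k (Suc j)) < multiplicity p (k j)"
  shows "\<exists>e\<ge>1. v * p ^ e \<in> M"
proof -
  have j_le: "Suc j \<le> l" using j depth_le[of v] by simp
  have v_dvd: "v dvd k j" "v dvd k (Suc j)" using j j_le dvd_k_iff by simp_all
  have k_nz: "k j \<noteq> 0" "k (Suc j) \<noteq> 0" using j j_le k_nonzero by simp_all
  obtain e where e: "multiplicity p v + e = multiplicity p (k j)" and dvd: "v * p ^ e dvd k j"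
    using dvd_mult_prime_power_to_multiplicity[OF v_dvd(1) k_nz(1) p] .
  have v_pos: "0 < v" using v by (simp add: mem_M_iff)
  have "multiplicity p (v * p ^ e) = multiplicity p (k j)"
    using multiplicity_mult_prime_power[of v p p e] v_pos p e by simp
  then have "\<not> v * p ^ e dvd k (Suc j)"
    using drop k_nz(2) dvd_imp_multiplicity_le[of "v * p ^ e" "k (Suc j)" p] by linarith
  then have "depth (v * p ^ e) = j"
    using j j_le dvd by (intro depth_eqI) simp_all
  then have "v * p ^ e \<in> M" using v_pos p j by (simp add: mem_M_iff prime_gt_0_nat)
  moreover have "multiplicity p v \<le> multiplicity p (k (Suc j))"
    using v_dvd(2) k_nz(2) by (rule dvd_imp_multiplicity_le)
  then have "1 \<le> e" using e drop by simp
  ultimately show ?thesis by blast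
qed

lemma depth_le_depth_of_level:
  assumes v: "v \<in> M" and w: "w \<in> M"
    and level: "multiplicity q w \<le> multiplicity q (k (depth v))"
    and stable: "\<And>j p. odd j \<Longrightarrow> 1 \<le> j \<Longrightarrow> j < depth v \<Longrightarrow> prime p \<Longrightarrow> p \<noteq> q \<Longrightarrow>
      multiplicity p (k j) \<le> multiplicity p (k (Suc j))"
  shows "depth v \<le> depth w"
proof (rule ccontr)
  assume "\<not> depth v \<le> depth w"
  then have lt: "depth w < depth v" by simp
  have t_le: "Suc (depth w) \<le> l" using lt depth_le[of v] by simp
  have "w dvd k (Suc (depth w))"
  proof (rule multiplicity_le_imp_dvd)
    show "w \<noteq> 0" using w by (simp add: mem_M_iff)
    fix r :: nat assume r: "prime r"
    show "multiplicity r w \<le> multiplicity r (k (Suc (depth w)))"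
    proof (cases "r = q")
      case True
      have "k (depth v) dvd k (Suc (depth w))" using lt depth_le[of v] by (intro k_dvd) simp_all
      then have "multiplicity q (k (depth v)) \<le> multiplicity q (k (Suc (depth w)))"
        using k_nonzero t_le by (intro dvd_imp_multiplicity_le) simp_all
      then show ?thesis using True level by simp
    next
      case False
      have "multiplicity r w \<le> multiplicity r (k (depth w))"
        using dvd_k_depth[OF w] k_depth_nonzero[OF w] by (rule dvd_imp_multiplicity_le)
      also have "\<dots> \<le> multiplicity r (k (Suc (depth w)))"
        using stable[OF _ depth_ge_1[OF w] lt r False] w by (simp add: mem_M_iff)
      finally show ?thesis .
    qed
  qed
  then show False using dvd_k_iff[of "Suc (depth w)" w] t_le by simp
qed

lemma dvd_of_same_level:
  assumes v: "v \<in> M" and w: "w \<in> M"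
    and level: "multiplicity q w = multiplicity q v"
    and top: "\<And>p. prime p \<Longrightarrow> p \<noteq> q \<Longrightarrow> multiplicity p (k (depth v)) \<le> multiplicity p v"
    and stable: "\<And>j p. odd j \<Longrightarrow> 1 \<le> j \<Longrightarrow> j < depth v \<Longrightarrow> prime p \<Longrightarrow> p \<noteq> q \<Longrightarrow>
      multiplicity p (k j) \<le> multiplicity p (k (Suc j))"
  shows "w dvd v"
proof (rule multiplicity_le_imp_dvd)
  show "w \<noteq> 0" using w by (simp add: mem_M_iff)
  have "multiplicity q v \<le> multiplicity q (k (depth v))"
    using dvd_k_depth[OF v] k_depth_nonzero[OF v] by (rule dvd_imp_multiplicity_le)
  then have "multiplicity q w \<le> multiplicity q (k (depth v))" using level by simp
  then have "depth v \<le> depth w" by (rule depth_le_depth_of_level[OF v w _ stable])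
  then have w_dvd: "w dvd k (depth v)"
    using dvd_k_iff depth_ge_1[OF v] depth_le by blast
  fix r :: nat assume r: "prime r"
  show "multiplicity r w \<le> multiplicity r v"
  proof (cases "r = q")
    case False
    have "multiplicity r w \<le> multiplicity r (k (depth v))"
      using w_dvd k_depth_nonzero[OF v] by (rule dvd_imp_multiplicity_le)
    also have "\<dots> \<le> multiplicity r v" using top[OF r False] .
    finally show ?thesis .
  qed (use level in simp)
qed

lemma ex_step_up_or_dvd_of_same_level:
  assumes "v \<in> M"
  shows "(\<exists>p e. prime p \<and> p \<noteq> q \<and> 1 \<le> e \<and> v * p ^ e \<in> M) \<or>
    (\<forall>w\<in>M. multiplicity q w = multiplicity q v \<longrightarrow> w dvd v)"
proof (cases "\<exists>p. prime p \<and> p \<noteq> q \<and> multiplicity p v < multiplicity p (k (depth v))")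
  case True
  then show ?thesis using ex_mult_prime_power_mem_at_depth[OF assms] by blast
next
  case no_top: False
  show ?thesis
  proof (cases "\<exists>j p. odd j \<and> 1 \<le> j \<and> j < depth v \<and> prime p \<and> p \<noteq> q \<and>
      multiplicity p (k (Suc j)) < multiplicity p (k j)")
    case True
    then show ?thesis using ex_mult_prime_power_mem_at_odd_index[OF assms] by blast
  next
    case False
    have top: "multiplicity p (k (depth v)) \<le> multiplicity p v" if "prime p" "p \<noteq> q" for p
      using no_top that by (meson not_less)
    have stable: "multiplicity p (k j) \<le> multiplicity p (k (Suc j))"
      if "odd j" "1 \<le> j" "j < depth v" "prime p" "p \<noteq> q" for j p
      using False that by (meson not_less)
    have "\<forall>w\<in>M. multiplicity q w = multiplicity q v \<longrightarrow> w dvd v"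
      using dvd_of_same_level[OF assms _ _ top stable] by blast
    then show ?thesis ..
  qed
qed

text \<open>Since \<open>multiplicity 1\<close> vanishes, \<open>q = 1\<close> makes the level all of \<open>M\<close> and \<open>edge_avoiding M 1\<close>
  the full edge relation.\<close>

lemma Max_level_reaches:
  assumes q: "q = 1 \<or> prime q" and v: "v \<in> M"
  shows "(edge_avoiding M q)\<^sup>*\<^sup>* (Max {w\<in>M. multiplicity q w = multiplicity q v}) v"
proof -
  define L where "L = {w\<in>M. multiplicity q w = multiplicity q v}"
  have fin: "finite L" using finite_M by (simp add: L_def)
  have "(edge_avoiding M q)\<^sup>*\<^sup>* (Max L) u" if "u \<in> L" for u
    using that
  proof (induction "Max L - u" arbitrary: u rule: less_induct)
    case less
    then have u: "u \<in> M" and level: "multiplicity q u = multiplicity q v"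
      by (simp_all add: L_def)
    have u_pos: "0 < u" using u by (simp add: mem_M_iff)
    from ex_step_up_or_dvd_of_same_level[OF u, of q] show ?case
    proof (elim disjE exE conjE)
      fix p e assume p: "prime p" "p \<noteq> q" "1 \<le> e" "u * p ^ e \<in> M"
      obtain f where f: "1 \<le> f" "u * p ^ f \<in> M" "pedge M p (u * p ^ f) u"
        using ex_pedge_below[OF u p(4) u_pos p(1) p(3)] by blast
      have "multiplicity q (u * p ^ f) = multiplicity q u"
        using u_pos p(1,2) q by (intro multiplicity_mult_prime_power_other) simp_all
      then have in_L: "u * p ^ f \<in> L" using f(2) level by (simp add: L_def)
      have "1 < p ^ f" using prime_gt_1_nat[OF p(1)] f(1) by (intro one_less_power) simp_all
      then have "u < u * p ^ f" using u_pos by simp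
      moreover have "u * p ^ f \<le> Max L" using in_L fin by simp
      ultimately have "Max L - u * p ^ f < Max L - u" by linarith
      then have "(edge_avoiding M q)\<^sup>*\<^sup>* (Max L) (u * p ^ f)"
        using in_L by (rule less.hyps)
      moreover have "edge_avoiding M q (u * p ^ f) u"
        using f(3) p(2) by (auto simp: edge_avoiding_def)
      ultimately show ?case by (rule rtranclp.rtrancl_into_rtrancl)
    next
      assume "\<forall>w\<in>M. multiplicity q w = multiplicity q u \<longrightarrow> w dvd u"
      moreover have "Max L \<in> L" using fin less.prems by (intro Max_in) auto
      ultimately have "Max L dvd u" using level by (simp add: L_def)
      then have "Max L \<le> u" using u_pos by (rule dvd_imp_le)
      moreover have "u \<le> Max L" using fin less.prems by simp
      ultimately show ?case by simp
    qed
  qed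
  then show ?thesis using v by (simp add: L_def)
qed

lemma Max_reaches: "v \<in> M \<Longrightarrow> (edge M)\<^sup>*\<^sup>* (Max M) v"
proof -
  assume v: "v \<in> M"
  have "{w\<in>M. multiplicity 1 w = multiplicity 1 v} = M" by (simp add: multiplicity_unit_left)
  then have "(edge_avoiding M 1)\<^sup>*\<^sup>* (Max M) v" using Max_level_reaches[of 1 v] v by simp
  then show ?thesis
    by (rule mono_rtranclp[rule_format, rotated]) (auto simp: edge_avoiding_def edge_def)
qed

lemma same_plane_of_same_multiplicity:
  assumes q: "prime q" and w: "w \<in> M" and x: "x \<in> M"
    and level: "multiplicity q w = multiplicity q x"
  shows "same_plane M q w x"
proof -
  define T where "T = Max {u\<in>M. multiplicity q u = multiplicity q x}"
  have "symclp (non_p_edge M q) a b" if ab: "edge_avoiding M q a b" for a b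
  proof -
    obtain p where p: "p \<noteq> q" "pedge M p a b" using ab by (auto simp: edge_avoiding_def)
    moreover have "b \<noteq> 0" using p(2) mem_M_iff by (auto simp: pedge_def)
    ultimately show ?thesis by (intro symclpI1 non_p_edge_if_pedge_other)
  qed
  then have "(edge_avoiding M q)\<^sup>*\<^sup>* \<le> (symclp (non_p_edge M q))\<^sup>*\<^sup>*"
    by (intro rtranclp_mono) blast
  moreover have "(edge_avoiding M q)\<^sup>*\<^sup>* T w" "(edge_avoiding M q)\<^sup>*\<^sup>* T x"
    using Max_level_reaches[of q w] Max_level_reaches[of q x] q w x level by (simp_all add: T_def)
  ultimately have "(symclp (non_p_edge M q))\<^sup>*\<^sup>* T w" "(symclp (non_p_edge M q))\<^sup>*\<^sup>* T x"
    by blast+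
  then have "(symclp (non_p_edge M q))\<^sup>*\<^sup>* w x"
    by (meson rtranclp_trans sympD symp_rtranclp_symclp)
  moreover have "(\<lambda>a b. non_p_edge M q a b \<or> non_p_edge M q b a) = symclp (non_p_edge M q)"
    by (simp add: symclp_def fun_eq_iff)
  ultimately show ?thesis using w x by (simp add: same_plane_def)
qed

lemma ex_odd_core: "\<exists>c. odd c \<and> (\<forall>w\<in>M. c * 2 ^ multiplicity 2 w \<in> M)"
proof -
  \<comment> \<open>\<open>1\<close> has the maximal depth \<open>l\<close>; admitting it merely makes the candidate set nonempty.\<close>
  define C where "C = {c::nat. odd c \<and> (c = 1 \<or> odd (depth c))}"
  obtain c where c: "c \<in> C" and c_min: "\<And>c'. c' \<in> C \<Longrightarrow> depth c \<le> depth c'"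
    using ex_has_least_nat[of "\<lambda>c. c \<in> C" 1 depth] by (auto simp: C_def)
  have c_odd: "odd c" and c_depth: "odd (depth c) \<or> depth c = l"
    using c depth_one by (auto simp: C_def)
  have "c * 2 ^ multiplicity 2 w \<in> M" if w: "w \<in> M" for w
  proof -
    define a where "a = multiplicity 2 w"
    have "w \<noteq> 0" using w by (simp add: mem_M_iff)
    then obtain o' where o': "w = 2 ^ a * o'" "\<not> 2 dvd o'"
      using multiplicity_decompose'[of w 2] unfolding a_def by auto
    have "depth w = min (depth (2 ^ a)) (depth o')"
      using o' by (simp add: depth_coprime_mult coprime_power_left_iff)
    then have "odd (min (depth (2 ^ a)) (depth o'))" using w by (simp add: mem_M_iff)
    moreover have "odd (depth o') \<Longrightarrow> depth c \<le> depth o'" using o'(2) by (intro c_min) (simp add: C_def)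
    moreover have "depth (2 ^ a) \<le> l" "depth o' \<le> l" by (rule depth_le)+
    ultimately have "odd (min (depth (2 ^ a)) (depth c))"
      using c_depth by (cases "depth (2 ^ a) \<le> depth o'"; cases "depth c < depth (2 ^ a)") (auto simp: min_def)
    moreover have "depth (c * 2 ^ a) = min (depth (2 ^ a)) (depth c)"
      using c_odd by (simp add: depth_coprime_mult coprime_power_right_iff min.commute)
    moreover have "0 < c * 2 ^ a" using c_odd by (simp add: odd_pos)
    ultimately show ?thesis by (simp add: mem_M_iff a_def)
  qed
  then show ?thesis using c_odd by blast
qed

lemma ex_2_path_meeting_all_planes:
  assumes "M \<noteq> {}"
  shows "\<exists>xs. p_path M 2 xs \<and> (\<forall>P\<in>planes M 2. set xs \<inter> P \<noteq> {})"
proof -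
  obtain c where c: "odd c" "\<And>w. w \<in> M \<Longrightarrow> c * 2 ^ multiplicity 2 w \<in> M"
    using ex_odd_core by blast
  define B where "B = {x\<in>M. \<exists>e. x = c * 2 ^ e}"
  have in_B: "c * 2 ^ multiplicity 2 w \<in> B" if "w \<in> M" for w
    using c(2)[OF that] by (auto simp: B_def)
  then have "B \<noteq> {}" using assms by blast
  then obtain xs where xs: "p_path M 2 xs" "set xs = B"
    using ex_p_path_through_prime_power_multiples[OF finite_M _ two_is_prime_nat] mem_M_iff
    unfolding B_def by blast
  have "set xs \<inter> P \<noteq> {}" if P: "P \<in> planes M 2" for P
  proof -
    obtain w where w: "w \<in> M" and P: "P = {b. same_plane M 2 w b}"
      using P unfolding planes_def by blast
    define x where "x = c * 2 ^ multiplicity 2 w"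
    have "multiplicity 2 c = 0" using c(1) by (simp add: not_dvd_imp_multiplicity_0)
    then have "multiplicity 2 x = multiplicity 2 w"
      using c(1) multiplicity_mult_prime_power[of c 2 2] by (auto simp: x_def)
    then have "same_plane M 2 w x"
      using w c(2)[OF w] by (intro same_plane_of_same_multiplicity) (simp_all add: x_def)
    then show ?thesis using in_B[OF w] xs(2) P by (auto simp: x_def)
  qed
  then show ?thesis using xs(1) by blast
qed

end

theorem lemma6p8:
  fixes l :: nat and k :: "nat \<Rightarrow> nat" and M :: "nat set"
  assumes "\<forall>j\<in>{1..l}. 0 < k j"
    and "\<forall>j\<in>{2..l}. k j dvd k (j - 1)"
    and "finite M" and "\<forall>m\<in>M. 0 < m"
    and "(\<lambda>z. \<Sum>j=1..l. (-1) ^ (j - 1) * Lambda (k j) z) = (\<lambda>z. \<Sum>m\<in>M. Psi m z)"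
  shows "M = {} \<or>
    ((\<exists>m1\<in>M. (\<forall>m\<in>M. m \<le> m1) \<and> (\<forall>v\<in>M. (edge M)\<^sup>*\<^sup>* m1 v)) \<and>
     (\<exists>xs. p_path M 2 xs \<and> (\<forall>P\<in>planes M 2. set xs \<inter> P \<noteq> {})))"
proof -
  interpret divisor_chain l k
    using assms(1,2) by unfold_locales
  have "M = {x. 0 < x \<and> odd (card (dvd_indices l k x))}"
    using mem_iff_odd_depth[OF assms(5,3)] assms(4) by auto
  then interpret odd_depth_set l k M
    using assms(3) by unfold_locales
  have "Max M \<in> M \<and> (\<forall>m\<in>M. m \<le> Max M) \<and> (\<forall>v\<in>M. (edge M)\<^sup>*\<^sup>* (Max M) v)" if "M \<noteq> {}"
    using that assms(3) Max_reaches by simp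
  then show ?thesis using ex_2_path_meeting_all_planes by blast
qed

end
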